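(* Let $\mathcal{A}$ be a separating union-closed family with base set $[n]$ and height $h=4$, and let $\mathcal{B}=\{B_1,B_2,B_3\}$ be a choice of $\mathcal{B}(\mathcal{A})$ with $|\mathcal{B}|=3$. Suppose $|B|=n$, where $B=b(\mathcal{A}_{<n/2})$. Then for every $A \in \mathcal{A}_{<n/2} \setminus \mathcal{B}$, we have $\bigcup_{i=1}^3 \mathrm{irr}_{\mathcal{B}}(B_i) \not\subseteq A$.
   Context: A family of sets $\mathcal{A}$ is union-closed if it is a finite family of distinct finite sets with at least one nonempty member set, and $X,Y\in\mathcal{A}$ implies $X\cup Y\in\mathcal{A}$ (the empty set may be a member). For a family $\mathcal{F}$, $b(\mathcal{F})=\bigcup_{F\in\mathcal{F}}F$; the base set $b(\mathcal{A})$ is denoted $[n]=\{1,\dots,n\}$. $\mathcal{A}$ is separating if for any two distinct $x,y\in[n]$ there is $A\in\mathcal{A}$ containing exactly one of $x,y$. A chain in $\mathcal{A}$ is a subfamily any two distinct members of which are comparable under proper inclusion; the height $h$ of $\mathcal{A}$ is the maximum size of a chain in $\mathcal{A}$. For real $x\ge 0$, $\mathcal{A}_{<x}=\{A\in\mathcal{A} : |A|<x\}$. For $\mathcal{S}\subseteq\mathcal{A}$ and $S\in\mathcal{S}$, $\mathrm{irr}_{\mathcal{S}}(S)=\{s\in S : s\notin b(\mathcal{S}\setminus\{S\})\}$, and $\mathcal{S}$ is irredundant if $\mathrm{irr}_{\mathcal{S}}(S)\neq\emptyset$ for every $S\in\mathcal{S}$. With $B=b(\mathcal{A}_{<n/2})$,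 $\mathcal{B}(\mathcal{A})$ denotes any irredundant subfamily of $\mathcal{A}_{<n/2}$ of minimum size such that $b(\mathcal{B}(\mathcal{A}))=B$. *)

theory Defs
  imports Complex_Main
begin

definition union_closed :: "'a set set \<Rightarrow> bool" where
  "union_closed \<A> \<longleftrightarrow> finite \<A> \<and> (\<forall>X\<in>\<A>. finite X) \<and> (\<exists>X\<in>\<A>. X \<noteq> {})
     \<and> (\<forall>X\<in>\<A>. \<forall>Y\<in>\<A>. X \<union> Y \<in> \<A>)"

definition base :: "'a set set \<Rightarrow> 'a set" where
  "base \<F> = \<Union>\<F>"

definition separating :: "'a set set \<Rightarrow> bool" where
  "separating \<A> \<longleftrightarrow> (\<forall>x\<in>base \<A>. \<forall>y\<in>base \<A>. x \<noteq> y \<longrightarrow>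
     (\<exists>A\<in>\<A>. (x \<in> A \<and> y \<notin> A) \<or> (y \<in> A \<and> x \<notin> A)))"

definition is_chain :: "'a set set \<Rightarrow> bool" where
  "is_chain \<C> \<longleftrightarrow> (\<forall>X\<in>\<C>. \<forall>Y\<in>\<C>. X \<noteq> Y \<longrightarrow> X \<subset> Y \<or> Y \<subset> X)"

definition height :: "'a set set \<Rightarrow> nat" where
  "height \<A> = Max {card \<C> | \<C>. \<C> \<subseteq> \<A> \<and> is_chain \<C>}"

definition small_sets :: "'a set set \<Rightarrow> real \<Rightarrow> 'a set set" where
  "small_sets \<A> x = {A \<in> \<A>. real (card A) < x}"

definition irr :: "'a set set \<Rightarrow> 'a set \<Rightarrow> 'a set" where
  "irr \<S> S = {s \<in> S. s \<notin> base (\<S> - {S})}"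

definition irredundant :: "'a set set \<Rightarrow> bool" where
  "irredundant \<S> \<longleftrightarrow> (\<forall>S\<in>\<S>. irr \<S> S \<noteq> {})"

definition is_B_choice :: "'a set set \<Rightarrow> 'a set set \<Rightarrow> bool" where
  "is_B_choice \<A> \<B> \<longleftrightarrow>
     (let n = card (base \<A>); L = small_sets \<A> (real n / 2) in
       \<B> \<subseteq> L \<and> irredundant \<B> \<and> base \<B> = base L \<and>
       (\<forall>\<S>. \<S> \<subseteq> L \<and> irredundant \<S> \<and> base \<S> = base L \<longrightarrow> card \<B> \<le> card \<S>))"

end

theory Submission
  imports Defs
begin

text \<open>The irreducible elements of three distinct sets \<open>B\<^sub>1, B\<^sub>2, B\<^sub>3\<close> are the points covered exactly
  once. Inclusion-exclusion bounds the points covered at least twice by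
  \<open>|B\<^sub>1| + |B\<^sub>2| + |B\<^sub>3| - n < n/2\<close> when the sets cover \<open>[n]\<close> and each has fewer than \<open>n/2\<close>
  elements, so more than \<open>n/2\<close> points are irreducible and cannot all lie in a set
  of size below \<open>n/2\<close>.\<close>

lemma card_three_distinct:
  assumes "card {a, b, c} = 3"
  shows "a \<noteq> b" "a \<noteq> c" "b \<noteq> c"
  using assms by (auto simp: card_insert_if split: if_splits)

lemma irr_Un_three:
  assumes "B1 \<noteq> B2" "B1 \<noteq> B3" "B2 \<noteq> B3"
  shows "irr {B1, B2, B3} B1 \<union> irr {B1, B2, B3} B2 \<union> irr {B1, B2, B3} B3
           = (B1 \<union> B2 \<union> B3) - ((B1 \<inter> B2) \<union> ((B1 \<union> B2) \<inter> B3))"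
  using assms unfolding irr_def base_def by auto

lemma card_Un3_plus_card_covered_twice_le:
  assumes "finite B1" "finite B2" "finite B3"
  shows "card (B1 \<union> B2 \<union> B3) + card ((B1 \<inter> B2) \<union> ((B1 \<union> B2) \<inter> B3))
           \<le> card B1 + card B2 + card B3"
proof -
  have "card B1 + card B2 = card (B1 \<union> B2) + card (B1 \<inter> B2)"
    using assms by (intro card_Un_Int) auto
  moreover have "card (B1 \<union> B2) + card B3 = card (B1 \<union> B2 \<union> B3) + card ((B1 \<union> B2) \<inter> B3)"
    using assms by (intro card_Un_Int) auto
  moreover have "card ((B1 \<inter> B2) \<union> ((B1 \<union> B2) \<inter> B3)) \<le> card (B1 \<inter> B2) + card ((B1 \<union> B2) \<inter> B3)"
    by (rule card_Un_le)
  ultimately show ?thesis by linarith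
qed

lemma card_covered_once_gt_half:
  assumes "finite B1" "finite B2" "finite B3"
    and "card (B1 \<union> B2 \<union> B3) = n"
    and "2 * card B1 < n" "2 * card B2 < n" "2 * card B3 < n"
  shows "n < 2 * card ((B1 \<union> B2 \<union> B3) - ((B1 \<inter> B2) \<union> ((B1 \<union> B2) \<inter> B3)))"
proof -
  have "card ((B1 \<union> B2 \<union> B3) - ((B1 \<inter> B2) \<union> ((B1 \<union> B2) \<inter> B3)))
          = n - card ((B1 \<inter> B2) \<union> ((B1 \<union> B2) \<inter> B3))"
    using assms(1-4) by (subst card_Diff_subset) auto
  with card_Un3_plus_card_covered_twice_le[OF assms(1-3)] assms(4-7) show ?thesis
    by linarith
qed

lemma double_card_small_sets_less:
  "A \<in> small_sets \<A> (real n / 2) \<Longrightarrow> 2 * card A < n"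
  unfolding small_sets_def by auto

lemma base_small_sets_eq_base:
  assumes "finite (base \<A>)" "card (base (small_sets \<A> x)) = card (base \<A>)"
  shows "base (small_sets \<A> x) = base \<A>"
proof (rule card_subset_eq[OF assms(1) _ assms(2)])
  show "base (small_sets \<A> x) \<subseteq> base \<A>"
    unfolding small_sets_def base_def by auto
qed

theorem propositionG:
  fixes \<A> :: "nat set set" and n :: nat and B1 B2 B3 :: "nat set"
  assumes "union_closed \<A>"
    and "separating \<A>"
    and "base \<A> = {1..n}"
    and "height \<A> = 4"
    and "is_B_choice \<A> {B1, B2, B3}"
    and "card {B1, B2, B3} = 3"
    and "card (base (small_sets \<A> (real n / 2))) = n"
  shows "\<forall>A \<in> small_sets \<A> (real n / 2) - {B1, B2, B3}.
           \<not> (irr {B1, B2, B3} B1 \<union> irr {B1, B2, B3} B2 \<union> irr {B1, B2, B3} B3 \<subseteq> A)"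
proof (intro ballI notI)
  fix A
  assume A: "A \<in> small_sets \<A> (real n / 2) - {B1, B2, B3}"
    and irr_sub: "irr {B1, B2, B3} B1 \<union> irr {B1, B2, B3} B2 \<union> irr {B1, B2, B3} B3 \<subseteq> A"
  define L where "L = small_sets \<A> (real n / 2)"
  have B_L: "{B1, B2, B3} \<subseteq> L" and base_B: "base {B1, B2, B3} = base L"
    using assms(3,5) unfolding is_B_choice_def L_def Let_def by auto
  have "base L = {1..n}"
    using base_small_sets_eq_base[of \<A>] assms(3,7) unfolding L_def by simp
  with base_B have cover: "card (B1 \<union> B2 \<union> B3) = n"
    unfolding base_def by (simp add: Un_assoc)
  have small: "X \<in> L \<Longrightarrow> finite X \<and> 2 * card X < n" for X
    using assms(1) double_card_small_sets_less
    unfolding L_def small_sets_def union_closed_def by blast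
  obtain "B1 \<noteq> B2" "B1 \<noteq> B3" "B2 \<noteq> B3"
    using card_three_distinct[OF assms(6)] by blast
  then have "n < 2 * card (irr {B1, B2, B3} B1 \<union> irr {B1, B2, B3} B2 \<union> irr {B1, B2, B3} B3)"
    using irr_Un_three[of B1 B2 B3] card_covered_once_gt_half[OF _ _ _ cover] small B_L by simp
  also have "\<dots> \<le> 2 * card A"
    using card_mono[OF _ irr_sub] small A unfolding L_def by simp
  finally show False
    using small A unfolding L_def by fastforce
qed

end
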